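(* Let $A\in\mathbb{R}^{n\times d}$, $S\in\mathbb{R}^{d\times m}$, $\lambda>0$, and let $f:\mathbb{R}^n\to\mathbb{R}$ be convex and differentiable with $\mu$-Lipschitz gradient. Let $x^*$ be the unique minimizer of $x\mapsto f(Ax)+\frac{\lambda}{2}\|x\|_2^2$ over $\mathbb{R}^d$, let $\alpha^*$ be any minimizer of $\alpha\mapsto f(AS\alpha)+\frac{\lambda}{2}\|S\alpha\|_2^2$ over $\mathbb{R}^m$, and set $\widetilde{x}=-\frac{1}{\lambda}A^\top\nabla f(AS\alpha^* )$. If $\lambda\ge 2\mu Z_f^2$, then $$\|\widetilde{x}-x^*\|_2\le\sqrt{\frac{\mu}{2\lambda}}\,Z_f\,\|x^*\|_2,$$ and consequently $$\|\widetilde{x}-x^*\|_2\le\sqrt{\frac{\mu}{2\lambda}}\,\|P_S^\perp A^\top\|_2\,\|x^*\|_2 .$$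
   Context: $f^*(z)=\sup_{w}\{w^\top z-f(w)\}$ is the Fenchel conjugate of $f$, with domain $\mathrm{dom} f^*=\{z: f^*(z)<+\infty\}$. $z^*=\nabla f(Ax^* )$ is the (unique) solution of the dual problem $\max_z -f^*(z)-\frac{1}{2\lambda}\|A^\top z\|_2^2$. $P_S=S(S^\top S)^\dagger S^\top$ is the orthogonal projector onto $\mathrm{range}(S)$ and $P_S^\perp=I_d-P_S$. The quantity $Z_f=Z_f(A,S)$ is defined by $$Z_f(A,S)=\sup_{\Delta\in(\mathrm{dom} f^*-z^* ),\,\Delta\neq 0}\left(\frac{\Delta^\top A P_S^\perp A^\top\Delta}{\|\Delta\|_2^2}\right)^{1/2}.$$ $\|\cdot\|_2$ on matrices is the spectral norm. *)

theory Defs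
  imports "HOL-Analysis.Analysis"
begin

definition pinv :: "real^'n^'m \<Rightarrow> real^'m^'n" where
  "pinv M = (SOME X. M ** X ** M = M \<and> X ** M ** X = X \<and>
              transpose (M ** X) = M ** X \<and> transpose (X ** M) = X ** M)"

definition projS :: "real^'m^'d \<Rightarrow> real^'d^'d" where
  "projS S = S ** pinv (transpose S ** S) ** transpose S"

definition projS_perp :: "real^'m^'d \<Rightarrow> real^'d^'d" where
  "projS_perp S = mat 1 - projS S"

definition fconj :: "(real^'n \<Rightarrow> real) \<Rightarrow> real^'n \<Rightarrow> ereal" where
  "fconj f z = (SUP w. ereal (w \<bullet> z - f w))"

definition fconj_dom :: "(real^'n \<Rightarrow> real) \<Rightarrow> (real^'n) set" where
  "fconj_dom f = {z. fconj f z < \<infinity>}"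

text \<open>The quantity Z_f(A,S), for the dual solution zstar. The supremum is of a bounded set
  of nonnegative reals; 0 is included so that the empty case gives 0.\<close>
definition Zf :: "(real^'n \<Rightarrow> real) \<Rightarrow> real^'d^'n \<Rightarrow> real^'m^'d \<Rightarrow> real^'n \<Rightarrow> real" where
  "Zf f A S zstar = Sup (insert 0
     {sqrt ((\<Delta> \<bullet> ((A ** projS_perp S ** transpose A) *v \<Delta>)) / (norm \<Delta>)^2) | \<Delta>.
        \<Delta> \<in> (\<lambda>z. z - zstar) ` fconj_dom f \<and> \<Delta> \<noteq> 0})"

end

theory Submission
  imports Defs
begin

text \<open>Let \<open>x' = -A\<^sup>T\<nabla>f(AS\<alpha>\<^sup>*)/\<lambda>\<close>, \<open>e = x' - x\<^sup>*\<close> and \<open>\<Delta> = \<nabla>f(AS\<alpha>\<^sup>*) - \<nabla>f(Ax\<^sup>*)\<close>.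
  The first-order conditions of both problems give \<open>A\<^sup>T\<Delta> = -\<lambda> e\<close> and \<open>P\<^sub>S x' = S\<alpha>\<^sup>*\<close>,
  so cocoercivity of \<open>\<nabla>f\<close> (Baillon--Haddad) yields
  \<open>\<parallel>\<Delta>\<parallel>\<^sup>2 \<le> \<mu>\<lambda> (\<parallel>P\<^sub>S\<^sup>\<bottom> e\<parallel>\<^sup>2 + \<langle>P\<^sub>S\<^sup>\<bottom> e, x\<^sup>*\<rangle> - \<parallel>e\<parallel>\<^sup>2)\<close>.
  As a gradient of \<open>f\<close>, \<open>\<nabla>f(AS\<alpha>\<^sup>*)\<close> lies in the domain of \<open>f\<^sup>*\<close>, so the definition of
  \<open>Z\<^sub>f\<close> gives \<open>\<lambda>\<parallel>P\<^sub>S\<^sup>\<bottom> e\<parallel> = \<parallel>P\<^sub>S\<^sup>\<bottom>A\<^sup>T\<Delta>\<parallel> \<le> Z\<^sub>f\<parallel>\<Delta>\<parallel>\<close>. When \<open>\<lambda> \<ge> 2\<mu>Z\<^sub>f\<^sup>2\<close>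
  both positive terms on the right are absorbed by \<open>\<parallel>\<Delta>\<parallel>\<^sup>2\<close>, leaving
  \<open>2\<lambda>\<parallel>e\<parallel>\<^sup>2 \<le> \<mu>Z\<^sub>f\<^sup>2\<parallel>x\<^sup>*\<parallel>\<^sup>2\<close>. The second bound follows from \<open>Z\<^sub>f \<le> \<parallel>P\<^sub>S\<^sup>\<bottom>A\<^sup>T\<parallel>\<close>.\<close>

declare transpose_matrix_vector [simp del]

lemma has_real_derivative_along_line:
  fixes f :: "'a::real_inner \<Rightarrow> real"
  assumes grad: "\<And>u. (f has_derivative (\<lambda>h. g u \<bullet> h)) (at u)"
  shows "((\<lambda>t. f (x + t *\<^sub>R d)) has_real_derivative (g (x + t *\<^sub>R d) \<bullet> d)) (at t)"
proof -
  have "((\<lambda>t. x + t *\<^sub>R d) has_derivative (\<lambda>h. h *\<^sub>R d)) (at t)"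
    by (auto intro!: derivative_eq_intros)
  from has_derivative_compose[OF this grad]
  have "((\<lambda>t. f (x + t *\<^sub>R d)) has_derivative (\<lambda>h. g (x + t *\<^sub>R d) \<bullet> (h *\<^sub>R d))) (at t)"
    by (simp add: o_def)
  moreover have "(\<lambda>h. g (x + t *\<^sub>R d) \<bullet> (h *\<^sub>R d)) = (*) (g (x + t *\<^sub>R d) \<bullet> d)"
    by (auto simp: fun_eq_iff)
  ultimately show ?thesis by (simp add: has_field_derivative_def)
qed

lemma convex_gradient_inequality:
  fixes f :: "'a::real_inner \<Rightarrow> real"
  assumes convex: "convex_on UNIV f"
    and grad: "\<And>u. (f has_derivative (\<lambda>h. g u \<bullet> h)) (at u)"
  shows "f x + g x \<bullet> (y - x) \<le> f y"
proof -
  define \<phi> where "\<phi> t = f (x + t *\<^sub>R (y - x))" for t :: real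
  have "convex_on UNIV \<phi>"
  proof (rule convex_onI)
    fix t a b :: real
    assume t: "0 < t" "t < 1"
    have "x + ((1 - t) * a + t * b) *\<^sub>R (y - x)
          = (1 - t) *\<^sub>R (x + a *\<^sub>R (y - x)) + t *\<^sub>R (x + b *\<^sub>R (y - x))"
      by (simp add: algebra_simps)
    then show "\<phi> ((1 - t) *\<^sub>R a + t *\<^sub>R b) \<le> (1 - t) * \<phi> a + t * \<phi> b"
      unfolding \<phi>_def using convex_onD[OF convex, of t] t by simp
  qed simp
  moreover have "(\<phi> has_real_derivative (g x \<bullet> (y - x))) (at 0 within UNIV)"
    unfolding \<phi>_def using has_real_derivative_along_line[OF grad, of x "y - x" 0] by simp
  ultimately have "g x \<bullet> (y - x) * (1 - 0) \<le> \<phi> 1 - \<phi> 0"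
    by (intro convex_on_imp_above_tangent) auto
  then show ?thesis by (simp add: \<phi>_def)
qed

lemma lipschitz_gradient_upper_bound:
  fixes f :: "'a::real_inner \<Rightarrow> real"
  assumes grad: "\<And>u. (f has_derivative (\<lambda>h. g u \<bullet> h)) (at u)"
    and lip: "\<And>u v. norm (g u - g v) \<le> mu * norm (u - v)"
  shows "f y \<le> f x + g x \<bullet> (y - x) + mu / 2 * (norm (y - x))\<^sup>2"
proof -
  define d where "d = y - x"
  define h where "h t = f (x + t *\<^sub>R d) - t * (g x \<bullet> d) - mu / 2 * t\<^sup>2 * (norm d)\<^sup>2" for t
  have "h 1 \<le> h 0"
  proof (rule DERIV_nonpos_imp_nonincreasing[of 0 1])
    fix t :: real
    assume t: "0 \<le> t" "t \<le> 1"
    have "(h has_real_derivative (g (x + t *\<^sub>R d) \<bullet> d - g x \<bullet> d - mu * t * (norm d)\<^sup>2)) (at t)"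
      unfolding h_def by (rule derivative_eq_intros has_real_derivative_along_line[OF grad] | simp)+
    moreover have "(g (x + t *\<^sub>R d) - g x) \<bullet> d \<le> mu * t * (norm d)\<^sup>2"
    proof -
      have "(g (x + t *\<^sub>R d) - g x) \<bullet> d \<le> norm (g (x + t *\<^sub>R d) - g x) * norm d"
        by (rule norm_cauchy_schwarz)
      also have "\<dots> \<le> mu * norm (t *\<^sub>R d) * norm d"
        using lip[of "x + t *\<^sub>R d" x] by (simp add: mult_right_mono)
      finally show ?thesis using t by (simp add: power2_eq_square mult.assoc)
    qed
    ultimately show "\<exists>y. (h has_real_derivative y) (at t) \<and> y \<le> 0"
      by (auto simp: inner_diff_left)
  qed simp
  then show ?thesis by (simp add: h_def d_def)
qed

text \<open>Baillon--Haddad: apply the descent bound at the gradient step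
  \<open>z = b - (g b - g a) /\<^sub>R \<mu>\<close> and the gradient inequality at \<open>a\<close>, then symmetrise.\<close>
lemma lipschitz_gradient_cocoercive:
  fixes f :: "'a::real_inner \<Rightarrow> real"
  assumes convex: "convex_on UNIV f"
    and grad: "\<And>u. (f has_derivative (\<lambda>h. g u \<bullet> h)) (at u)"
    and lip: "\<And>u v. norm (g u - g v) \<le> mu * norm (u - v)"
    and mu: "mu \<ge> 0"
  shows "(norm (g x - g y))\<^sup>2 \<le> mu * ((g x - g y) \<bullet> (x - y))"
proof (cases "mu = 0")
  case True
  then show ?thesis using lip[of x y] by simp
next
  case False
  with mu have mu: "mu > 0" by simp
  have half: "f a + g a \<bullet> (b - a) + (norm (g b - g a))\<^sup>2 / (2 * mu) \<le> f b" for a b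
  proof -
    define D where "D = g b - g a"
    define z where "z = b - (1 / mu) *\<^sub>R D"
    have "f a + g a \<bullet> (z - a) \<le> f z"
      by (rule convex_gradient_inequality[OF convex grad])
    moreover have "f z \<le> f b + g b \<bullet> (z - b) + mu / 2 * (norm (z - b))\<^sup>2"
      by (rule lipschitz_gradient_upper_bound[OF grad lip])
    moreover have "g a \<bullet> (z - a) = g a \<bullet> (b - a) + g a \<bullet> (z - b)"
      by (simp add: inner_diff_right)
    moreover have "g b \<bullet> (z - b) - g a \<bullet> (z - b) = - ((norm D)\<^sup>2 / mu)"
      by (simp add: z_def D_def power2_norm_eq_inner inner_diff_left diff_divide_distrib)
    moreover have "mu / 2 * (norm (z - b))\<^sup>2 = (norm D)\<^sup>2 / (2 * mu)"
      using mu by (simp add: z_def power2_eq_square field_simps)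
    ultimately show ?thesis unfolding D_def by (simp add: field_simps)
  qed
  have "g x \<bullet> (y - x) + g y \<bullet> (x - y) = - ((g x - g y) \<bullet> (x - y))"
    by (simp add: algebra_simps inner_diff_left inner_diff_right inner_commute)
  then have "(norm (g x - g y))\<^sup>2 / mu \<le> (g x - g y) \<bullet> (x - y)"
    using half[of x y] half[of y x] norm_minus_commute[of "g y" "g x"] by (simp add: field_simps)
  then show ?thesis using mu by (simp add: field_simps)
qed

lemma lipschitz_constant_nonneg:
  fixes g :: "'a::euclidean_space \<Rightarrow> 'b::real_normed_vector"
  assumes lip: "\<And>u v. norm (g u - g v) \<le> mu * norm (u - v)"
  shows "mu \<ge> 0"
proof -
  obtain b :: 'a where b: "b \<in> Basis" using nonempty_Basis by blast
  have "0 \<le> mu * norm (b - 0)" using lip[of b 0] norm_ge_zero order_trans by blast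
  then show ?thesis using b by (simp add: zero_le_mult_iff)
qed

lemma gradient_in_fconj_dom:
  fixes f :: "real^'n \<Rightarrow> real"
  assumes convex: "convex_on UNIV f"
    and grad: "\<And>u. (f has_derivative (\<lambda>h. g u \<bullet> h)) (at u)"
  shows "g w \<in> fconj_dom f"
proof -
  have "fconj f (g w) \<le> ereal (w \<bullet> g w - f w)"
    unfolding fconj_def
  proof (rule SUP_least)
    fix y
    have "f w + g w \<bullet> (y - w) \<le> f y" by (rule convex_gradient_inequality[OF convex grad])
    then show "ereal (y \<bullet> g w - f y) \<le> ereal (w \<bullet> g w - f w)"
      by (simp add: inner_diff_right inner_commute)
  qed
  then show ?thesis unfolding fconj_dom_def using le_less_trans by fastforce
qed

lemma inner_matrix_transpose:
  fixes M :: "real^'a^'b"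
  shows "(M *v x) \<bullet> y = x \<bullet> (transpose M *v y)"
  by (metis dot_lmul_matrix transpose_matrix_vector inner_commute)

lemma inner_transpose_left:
  fixes M :: "real^'a^'b"
  shows "(transpose M *v y) \<bullet> x = y \<bullet> (M *v x)"
  using inner_matrix_transpose[of M x y] by (simp add: inner_commute)

lemma matrix_vector_mult_minus: "(M :: real^'a^'b) *v (- v) = - (M *v v)"
  by (simp add: vec_eq_iff matrix_vector_mult_def sum_negf)

lemma symmetric_matrixI:
  fixes M :: "real^'a^'a"
  assumes "\<And>x y. (M *v x) \<bullet> y = x \<bullet> (M *v y)"
  shows "transpose M = M"
proof -
  have "transpose M *v y = M *v y" for y
  proof -
    define v where "v = transpose M *v y - M *v y"
    have "v \<bullet> v = v \<bullet> (transpose M *v y) - v \<bullet> (M *v y)"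
      by (simp add: v_def inner_diff_right)
    also have "\<dots> = 0" using assms[of v y] inner_matrix_transpose[of M v y] by simp
    finally show ?thesis by (simp add: v_def)
  qed
  then show ?thesis by (simp add: matrix_eq)
qed

lemma symmetric_matrix_inner:
  fixes M :: "real^'a^'a"
  assumes "transpose M = M"
  shows "(M *v x) \<bullet> y = x \<bullet> (M *v y)"
  using inner_matrix_transpose[of M x y] assms by simp

lemma orthogonal_projection_exists:
  fixes R :: "'a::euclidean_space set"
  assumes "subspace R"
  obtains P where "linear P" "\<And>x. P x \<in> R" "\<And>x w. w \<in> R \<Longrightarrow> w \<bullet> (x - P x) = 0"
    "\<And>r. r \<in> R \<Longrightarrow> P r = r" "\<And>x y. P x \<bullet> y = x \<bullet> P y"
proof -
  obtain B where B: "pairwise orthogonal B" "span B = R"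
    using orthogonal_basis_subspace[OF assms] by metis
  define P where "P x = (\<Sum>b\<in>B. (b \<bullet> x / (b \<bullet> b)) *\<^sub>R b)" for x
  have lin: "linear P"
    unfolding P_def
    by (rule linearI)
       (auto simp: inner_add_right add_divide_distrib scaleR_add_left sum.distrib scaleR_sum_right)
  have range: "P x \<in> R" for x
    unfolding P_def B(2)[symmetric] by (intro span_sum span_mul span_base)
  have orth: "w \<bullet> (x - P x) = 0" if "w \<in> R" for w x
    using Gram_Schmidt_step[OF B(1), of w x] that B(2) unfolding P_def orthogonal_def by simp
  have fixed: "P r = r" if "r \<in> R" for r
  proof -
    have "r - P r \<in> R" using that range assms by (simp add: subspace_diff)
    then have "(r - P r) \<bullet> (r - P r) = 0" using orth by blast
    then show ?thesis by simp
  qed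
  have "P x \<bullet> y = x \<bullet> P y" for x y
  proof -
    have "P x \<bullet> y = P x \<bullet> P y" using orth[OF range[of x], of y] by (simp add: inner_diff_right)
    moreover have "P y \<bullet> x = P y \<bullet> P x"
      using orth[OF range[of y], of x] by (simp add: inner_diff_right)
    then have "x \<bullet> P y = P x \<bullet> P y" by (simp add: inner_commute)
    ultimately show ?thesis by simp
  qed
  with that lin range orth fixed show thesis by blast
qed

text \<open>The pseudo-inverse of a symmetric \<open>G\<close> inverts \<open>G\<close> on its range, which \<open>G\<close> maps
  bijectively onto itself, and composes this inverse with the orthogonal projection onto
  the range.\<close>
lemma symmetric_pinv_exists:
  fixes G :: "real^'m^'m"
  assumes sym: "transpose G = G"
  shows "\<exists>X. G ** X ** G = G \<and> X ** G ** X = X \<and>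
              transpose (G ** X) = G ** X \<and> transpose (X ** G) = X ** G"
proof -
  note symv = symmetric_matrix_inner[OF sym]
  define R where "R = range (\<lambda>v. G *v v)"
  have subR: "subspace R"
    unfolding R_def by (rule real_vector.linear_subspace_image) (auto simp: subspace_UNIV)
  then have spanR: "span R = R" by (simp add: span_eq_iff)
  obtain P where P: "linear P" "\<And>x. P x \<in> R" "\<And>x w. w \<in> R \<Longrightarrow> w \<bullet> (x - P x) = 0"
    "\<And>r. r \<in> R \<Longrightarrow> P r = r" "\<And>x y. P x \<bullet> y = x \<bullet> P y"
    using orthogonal_projection_exists[OF subR] by blast
  have GP: "G *v P x = G *v x" for x
  proof -
    have "(G *v (x - P x)) \<bullet> u = 0" for u
      using P(3)[of "G *v u" x] symv[of "x - P x" u] by (simp add: R_def inner_commute)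
    then show ?thesis by (metis inner_eq_zero_iff matrix_vector_mult_diff_distrib eq_iff_diff_eq_0)
  qed
  have "inj_on (\<lambda>v. G *v v) (span R)"
  proof (rule inj_onI)
    fix r r'
    assume r: "r \<in> span R" "r' \<in> span R" and eq: "G *v r = G *v r'"
    have "r - r' \<in> R" using r subR spanR by (simp add: subspace_diff)
    then obtain u where u: "r - r' = G *v u" by (auto simp: R_def)
    have "(r - r') \<bullet> (r - r') = u \<bullet> (G *v (r - r'))" using symv[of u "r - r'"] u by simp
    also have "\<dots> = 0" using eq by (simp add: matrix_vector_mult_diff_distrib)
    finally show "r = r'" by simp
  qed
  then obtain h where h: "range h \<subseteq> span R" "linear h" "\<forall>x\<in>span R. h (G *v x) = x"
    using real_vector.linear_inj_on_left_inverse[OF matrix_vector_mul_linear] by blast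
  define X where "X = matrix (h \<circ> P)"
  have Xv: "X *v v = h (P v)" for v
    unfolding X_def using matrix_vector_mul(2)[OF linear_compose[OF P(1) h(2)]] by (metis comp_apply)
  have GX: "G *v (X *v v) = P v" for v
  proof -
    obtain u where u: "P v = G *v u" using P(2)[of v] by (auto simp: R_def)
    have "h (P v) = P u" using h(3) P(2)[of u] spanR u GP[of u] by auto
    then show ?thesis using Xv GP u by simp
  qed
  have XG: "X *v (G *v v) = P v" for v
  proof -
    have "X *v (G *v v) = h (G *v P v)" by (simp add: Xv P(4) R_def GP)
    also have "\<dots> = P v" using h(3) P(2) spanR by simp
    finally show ?thesis .
  qed
  have XGX: "X *v (G *v (X *v v)) = X *v v" for v
    unfolding GX by (simp add: Xv P(4)[OF P(2)])
  have "G ** X ** G = G"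
    by (simp add: matrix_eq matrix_vector_mul_assoc[symmetric] XG GP)
  moreover have "X ** G ** X = X"
    by (simp only: matrix_eq matrix_vector_mul_assoc[symmetric] XGX) simp
  moreover have "transpose (G ** X) = G ** X"
    by (rule symmetric_matrixI) (simp add: matrix_vector_mul_assoc[symmetric] GX P(5))
  moreover have "transpose (X ** G) = X ** G"
    by (rule symmetric_matrixI) (simp add: matrix_vector_mul_assoc[symmetric] XG P(5))
  ultimately show ?thesis by blast
qed

lemma pinv_symmetric_cancel:
  fixes G :: "real^'m^'m"
  assumes "transpose G = G"
  shows "G ** pinv G ** G = G"
  using someI_ex[OF symmetric_pinv_exists[OF assms]] unfolding pinv_def by blast

lemma gram_generalized_inverse_cancel:
  fixes S :: "real^'m^'d" and Y :: "real^'m^'m"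
  assumes GYG: "(transpose S ** S) ** Y ** (transpose S ** S) = transpose S ** S"
  shows "S ** Y ** (transpose S ** S) = S"
proof -
  define G where "G = transpose S ** S"
  have SS: "(S *v a) \<bullet> (S *v b) = a \<bullet> (G *v b)" for a b
    by (simp add: G_def inner_matrix_transpose matrix_vector_mul_assoc)
  have GYGv: "G *v (Y *v (G *v v)) = G *v v" for v
    using GYG by (simp add: G_def matrix_vector_mul_assoc matrix_mul_assoc)
  have "S *v (Y *v (G *v v)) = S *v v" for v
  proof -
    define y where "y = Y *v (G *v v)"
    have "(S *v y - S *v v) \<bullet> (S *v y - S *v v) = y \<bullet> (G *v y) - y \<bullet> (G *v v) - v \<bullet> (G *v y) + v \<bullet> (G *v v)"
      by (simp add: inner_diff_left inner_diff_right SS)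
    also have "\<dots> = 0"
      using SS[of y v] SS[of v y] GYGv[of v] by (simp add: y_def inner_commute)
    finally show ?thesis by (simp add: y_def)
  qed
  then show ?thesis by (simp add: matrix_eq matrix_vector_mul_assoc[symmetric] G_def)
qed

lemma gram_pinv_cancel:
  fixes S :: "real^'m^'d"
  shows "S ** pinv (transpose S ** S) ** (transpose S ** S) = S"
    and "S ** transpose (pinv (transpose S ** S)) ** (transpose S ** S) = S"
proof -
  define G where "G = transpose S ** S"
  have sym: "transpose G = G" by (simp add: G_def matrix_transpose_mul)
  have GXG: "G ** pinv G ** G = G" by (rule pinv_symmetric_cancel[OF sym])
  have "G ** transpose (pinv G) ** G = transpose (G ** pinv G ** G)"
    by (simp add: matrix_transpose_mul sym matrix_mul_assoc)
  then have "G ** transpose (pinv G) ** G = G" by (simp add: GXG sym)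
  with GXG show "S ** pinv (transpose S ** S) ** (transpose S ** S) = S"
    and "S ** transpose (pinv (transpose S ** S)) ** (transpose S ** S) = S"
    by (simp_all add: gram_generalized_inverse_cancel G_def)
qed

lemma projS_idempotent: "projS S ** projS S = projS S"
proof -
  have "projS S ** projS S
        = (S ** pinv (transpose S ** S) ** (transpose S ** S)) ** pinv (transpose S ** S) ** transpose S"
    by (simp add: projS_def matrix_mul_assoc)
  then show ?thesis by (simp only: gram_pinv_cancel projS_def)
qed

lemma projS_symmetric: "transpose (projS S) = projS S"
proof -
  have "transpose (projS S) ** projS S
        = (S ** transpose (pinv (transpose S ** S)) ** (transpose S ** S)) ** pinv (transpose S ** S) ** transpose S"
    by (simp add: projS_def matrix_mul_assoc matrix_transpose_mul)
  then have PtP: "transpose (projS S) ** projS S = projS S"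
    by (simp only: gram_pinv_cancel projS_def)
  have "transpose (projS S) = transpose (transpose (projS S) ** projS S)" by (simp only: PtP)
  also have "\<dots> = transpose (projS S) ** projS S" by (simp add: matrix_transpose_mul)
  finally show ?thesis using PtP by simp
qed

lemma projS_normal_equations:
  assumes "transpose S *v x = transpose S *v (S *v a)"
  shows "projS S *v x = S *v a"
proof -
  have "projS S *v x = (S ** pinv (transpose S ** S) ** (transpose S ** S)) *v a"
    using assms by (simp add: projS_def matrix_vector_mul_assoc[symmetric])
  then show ?thesis by (simp only: gram_pinv_cancel)
qed

lemma projS_perp_apply: "projS_perp S *v x = x - projS S *v x"
  by (simp add: projS_perp_def matrix_vector_mult_diff_rdistrib)

lemma projS_perp_symmetric: "transpose (projS_perp S) = projS_perp S"
  by (rule symmetric_matrixI)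
     (simp add: projS_perp_apply inner_diff_left inner_diff_right
        symmetric_matrix_inner[OF projS_symmetric])

lemma projS_perp_idempotent: "projS_perp S ** projS_perp S = projS_perp S"
proof -
  have "projS S *v (projS S *v x) = projS S *v x" for x
    by (simp add: matrix_vector_mul_assoc projS_idempotent)
  then show ?thesis
    by (simp add: matrix_eq matrix_vector_mul_assoc[symmetric] projS_perp_apply
        matrix_vector_mult_diff_distrib)
qed

lemma projector_quadratic_form:
  fixes P :: "real^'a^'a"
  assumes sym: "transpose P = P" and idem: "P ** P = P"
  shows "x \<bullet> (P *v x) = (norm (P *v x))\<^sup>2"
proof -
  have "(P *v x) \<bullet> (P *v x) = x \<bullet> (P *v (P *v x))"
    by (rule symmetric_matrix_inner[OF sym])
  then show ?thesis by (simp add: power2_norm_eq_inner matrix_vector_mul_assoc idem)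
qed

lemma Zf_quotient_eq:
  "sqrt ((\<Delta> \<bullet> ((A ** projS_perp S ** transpose A) *v \<Delta>)) / (norm \<Delta>)\<^sup>2)
     = norm (projS_perp S *v (transpose A *v \<Delta>)) / norm \<Delta>"
proof -
  have "\<Delta> \<bullet> ((A ** projS_perp S ** transpose A) *v \<Delta>)
        = (transpose A *v \<Delta>) \<bullet> (projS_perp S *v (transpose A *v \<Delta>))"
    by (simp add: matrix_vector_mul_assoc[symmetric] inner_commute inner_matrix_transpose)
  also have "\<dots> = (norm (projS_perp S *v (transpose A *v \<Delta>)))\<^sup>2"
    by (rule projector_quadratic_form[OF projS_perp_symmetric projS_perp_idempotent])
  finally show ?thesis by (simp add: real_sqrt_divide)
qed

lemma projS_perp_transpose_le_onorm:
  "norm (projS_perp S *v (transpose A *v \<Delta>))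
     \<le> onorm (\<lambda>v. (projS_perp S ** transpose A) *v v) * norm \<Delta>"
  using onorm[of "\<lambda>v. (projS_perp S ** transpose A) *v v" \<Delta>]
  by (simp add: matrix_vector_mul_assoc)

lemma Zf_eq_Sup:
  "Zf f A S z0 = Sup (insert 0 {norm (projS_perp S *v (transpose A *v \<Delta>)) / norm \<Delta> | \<Delta>.
      \<Delta> \<in> (\<lambda>z. z - z0) ` fconj_dom f \<and> \<Delta> \<noteq> 0})"
  unfolding Zf_def Zf_quotient_eq ..

lemma Zf_bdd_above:
  "bdd_above (insert 0 {norm (projS_perp S *v (transpose A *v \<Delta>)) / norm \<Delta> | \<Delta>.
      \<Delta> \<in> (\<lambda>z. z - z0) ` fconj_dom f \<and> \<Delta> \<noteq> 0})"
  by (rule bdd_aboveI[of _ "onorm (\<lambda>v. (projS_perp S ** transpose A) *v v)"])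
     (auto simp: divide_le_eq projS_perp_transpose_le_onorm onorm_pos_le)

lemma Zf_nonneg: "Zf f A S z0 \<ge> 0"
  unfolding Zf_eq_Sup by (rule cSup_upper[OF _ Zf_bdd_above]) simp

lemma Zf_le_onorm: "Zf f A S z0 \<le> onorm (\<lambda>v. (projS_perp S ** transpose A) *v v)"
  unfolding Zf_eq_Sup
  by (rule cSup_least) (auto simp: divide_le_eq projS_perp_transpose_le_onorm onorm_pos_le)

lemma Zf_bound:
  assumes "\<Delta> \<in> (\<lambda>z. z - z0) ` fconj_dom f"
  shows "norm (projS_perp S *v (transpose A *v \<Delta>)) \<le> Zf f A S z0 * norm \<Delta>"
proof (cases "\<Delta> = 0")
  case False
  with assms have "norm (projS_perp S *v (transpose A *v \<Delta>)) / norm \<Delta> \<le> Zf f A S z0"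
    unfolding Zf_eq_Sup by (intro cSup_upper[OF _ Zf_bdd_above]) auto
  with False show ?thesis by (simp add: divide_le_eq mult.commute)
qed simp

lemma regularized_minimizer_stationary:
  fixes M :: "real^'k^'n" and N :: "real^'k^'j" and f :: "real^'n \<Rightarrow> real"
  assumes grad: "\<And>u. (f has_derivative (\<lambda>h. g u \<bullet> h)) (at u)"
    and min: "\<And>y. f (M *v c) + lam / 2 * (norm (N *v c))\<^sup>2 \<le> f (M *v y) + lam / 2 * (norm (N *v y))\<^sup>2"
  shows "transpose M *v g (M *v c) + lam *\<^sub>R (transpose N *v (N *v c)) = 0"
proof -
  define \<phi> where "\<phi> y = f (M *v y) + lam / 2 * ((N *v y) \<bullet> (N *v y))" for y
  define \<phi>' where "\<phi>' h = g (M *v c) \<bullet> (M *v h) + lam / 2 * ((N *v c) \<bullet> (N *v h) + (N *v h) \<bullet> (N *v c))"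
    for h
  have lin: "((\<lambda>y. L *v y) has_derivative (\<lambda>h. L *v h)) (at c)" for L :: "real^'k^'i"
    by (rule bounded_linear_imp_has_derivative) simp
  have "(\<phi> has_derivative \<phi>') (at c)"
    unfolding \<phi>_def \<phi>'_def
    using has_derivative_compose[OF lin grad]
    by (intro has_derivative_add has_derivative_mult_right has_derivative_inner[OF lin lin])
       (simp add: o_def)
  moreover have "\<forall>\<^sub>F y in at c. \<phi> c \<le> \<phi> y"
    using min by (simp add: \<phi>_def power2_norm_eq_inner)
  ultimately have zero: "\<phi>' h = 0" for h
    using has_derivative_local_min by metis
  have "(transpose M *v g (M *v c) + lam *\<^sub>R (transpose N *v (N *v c))) \<bullet> h = \<phi>' h" for h
    unfolding \<phi>'_def
    by (simp add: inner_add_left inner_transpose_left inner_commute[of "N *v c"] algebra_simps)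
  with zero show ?thesis by (metis inner_eq_zero_iff)
qed

lemma sketched_solution_optimality:
  fixes A :: "real^'d^'n" and S :: "real^'m^'d" and f :: "real^'n \<Rightarrow> real"
  assumes lam: "lam > 0"
    and grad: "\<And>u. (f has_derivative (\<lambda>h. g u \<bullet> h)) (at u)"
    and xstar_min: "\<And>x. f (A *v xstar) + lam / 2 * (norm xstar)\<^sup>2 \<le> f (A *v x) + lam / 2 * (norm x)\<^sup>2"
    and alpha_min: "\<And>a. f (A *v (S *v alpha)) + lam / 2 * (norm (S *v alpha))\<^sup>2
                        \<le> f (A *v (S *v a)) + lam / 2 * (norm (S *v a))\<^sup>2"
  defines "xt \<equiv> (- (1 / lam)) *\<^sub>R (transpose A *v g (A *v (S *v alpha)))"
  shows "transpose A *v (g (A *v (S *v alpha)) - g (A *v xstar)) = - lam *\<^sub>R (xt - xstar)"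
    and "S *v alpha = xt - projS_perp S *v xt"
proof -
  have Axt: "transpose A *v g (A *v (S *v alpha)) = - lam *\<^sub>R xt"
    using lam by (simp add: xt_def)
  have "transpose A *v g (A *v xstar) + lam *\<^sub>R (transpose (mat 1) *v (mat 1 *v xstar)) = 0"
    by (rule regularized_minimizer_stationary[OF grad]) (use xstar_min in simp)
  then have "transpose A *v g (A *v xstar) = - lam *\<^sub>R xstar"
    by (simp add: eq_neg_iff_add_eq_0)
  then show "transpose A *v (g (A *v (S *v alpha)) - g (A *v xstar)) = - lam *\<^sub>R (xt - xstar)"
    by (simp add: matrix_vector_mult_diff_distrib Axt algebra_simps)
  have "transpose (A ** S) *v g ((A ** S) *v alpha) + lam *\<^sub>R (transpose S *v (S *v alpha)) = 0"
    by (rule regularized_minimizer_stationary[OF grad])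
       (use alpha_min in \<open>simp add: matrix_vector_mul_assoc[symmetric]\<close>)
  then have "transpose S *v (- lam *\<^sub>R xt) + lam *\<^sub>R (transpose S *v (S *v alpha)) = 0"
    by (simp add: matrix_transpose_mul matrix_vector_mul_assoc[symmetric] Axt)
  then have "transpose S *v xt = transpose S *v (S *v alpha)"
    using lam by (auto simp: matrix_vector_mult_minus matrix_vector_mult_scaleR algebra_simps)
  then have "projS S *v xt = S *v alpha" by (rule projS_normal_equations)
  then show "S *v alpha = xt - projS_perp S *v xt" by (simp add: projS_perp_apply)
qed

lemma scalar_error_bound:
  fixes t p E X Z mu lam :: real
  assumes mu: "mu > 0" and lam: "lam > 0"
    and nonneg: "p \<ge> 0" "t \<ge> 0" "X \<ge> 0" "E \<ge> 0" "Z \<ge> 0"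
    and coc: "t\<^sup>2 \<le> mu * lam * (p\<^sup>2 + p * X - E\<^sup>2)"
    and proj: "lam * p \<le> Z * t"
    and lam_ge: "2 * mu * Z\<^sup>2 \<le> lam"
  shows "E \<le> sqrt (mu / (2 * lam)) * Z * X"
proof -
  have "lam * (mu * lam * p\<^sup>2) \<le> lam * (t\<^sup>2 / 2)"
  proof -
    have "(lam * p)\<^sup>2 \<le> (Z * t)\<^sup>2" using proj lam nonneg by (intro power_mono) auto
    then have "mu * (lam * p)\<^sup>2 \<le> mu * Z\<^sup>2 * t\<^sup>2"
      using mu by (simp add: power_mult_distrib mult_left_mono mult.assoc)
    also have "\<dots> \<le> lam * (t\<^sup>2 / 2)" using mult_right_mono[OF lam_ge, of "t\<^sup>2"] by simp
    finally show ?thesis by (simp add: power2_eq_square algebra_simps)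
  qed
  then have quad: "mu * lam * p\<^sup>2 \<le> t\<^sup>2 / 2" using lam by simp
  have "mu * lam * p * X \<le> mu * (Z * t) * X"
    using mult_left_mono[OF mult_right_mono[OF proj nonneg(3)], of mu] mu by (simp add: mult.assoc)
  also have "\<dots> \<le> t\<^sup>2 / 2 + (mu * Z * X)\<^sup>2 / 2"
    using sum_power2_ge_zero[of "t - mu * Z * X" 0] by (simp add: power2_eq_square algebra_simps)
  finally have "mu * lam * E\<^sup>2 \<le> mu * (mu / 2 * (Z * X)\<^sup>2)"
    using coc quad by (simp add: power2_eq_square algebra_simps)
  then have "lam * E\<^sup>2 \<le> mu / 2 * (Z * X)\<^sup>2" using mu by (simp add: mult.assoc)
  then have "E\<^sup>2 \<le> mu / (2 * lam) * (Z * X)\<^sup>2" using lam by (simp add: field_simps)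
  then have "E \<le> sqrt (mu / (2 * lam) * (Z * X)\<^sup>2)" by (rule real_le_rsqrt)
  also have "\<dots> = sqrt (mu / (2 * lam)) * \<bar>Z * X\<bar>"
    by (simp only: real_sqrt_mult real_sqrt_abs)
  also have "\<dots> = sqrt (mu / (2 * lam)) * Z * X"
    using nonneg by simp
  finally show ?thesis .
qed

text \<open>Here \<open>P\<close> stands for \<open>P\<^sub>S\<^sup>\<bottom>\<close>, and \<open>e - P (e + xs)\<close> is \<open>S\<alpha>\<^sup>* - x\<^sup>*\<close> rewritten
  through \<open>x' = e + x\<^sup>*\<close> and \<open>S\<alpha>\<^sup>* = x' - P x'\<close>.\<close>
lemma projected_error_bound:
  fixes A :: "real^'d^'n" and P :: "real^'d^'d" and D :: "real^'n" and e xs :: "real^'d"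
  assumes lam: "lam > 0" and mu: "mu \<ge> 0" and Z: "Z \<ge> 0"
    and sym: "transpose P = P" and idem: "P ** P = P"
    and AtD: "transpose A *v D = - lam *\<^sub>R e"
    and coc: "(norm D)\<^sup>2 \<le> mu * (D \<bullet> (A *v (e - P *v (e + xs))))"
    and proj: "norm (P *v (transpose A *v D)) \<le> Z * norm D"
    and lam_ge: "2 * mu * Z\<^sup>2 \<le> lam"
  shows "norm e \<le> sqrt (mu / (2 * lam)) * Z * norm xs"
proof (cases "mu = 0")
  case True
  then have "transpose A *v D = 0" using coc by simp
  then have "e = 0" using AtD lam by simp
  then show ?thesis using Z True by simp
next
  case False
  with mu have mu: "mu > 0" by simp
  have De: "D \<bullet> (A *v u) = - lam * (e \<bullet> u)" for u
    using inner_matrix_transpose[of A u D] by (simp add: inner_commute AtD)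
  have ee: "e \<bullet> (e - P *v (e + xs)) = (norm e)\<^sup>2 - (norm (P *v e))\<^sup>2 - (P *v e) \<bullet> xs"
    using projector_quadratic_form[OF sym idem, of e] symmetric_matrix_inner[OF sym, of e xs]
    by (simp add: inner_diff_right matrix_vector_right_distrib inner_add_right power2_norm_eq_inner)
  have "D \<bullet> (A *v (e - P *v (e + xs))) = lam * ((norm (P *v e))\<^sup>2 + (P *v e) \<bullet> xs - (norm e)\<^sup>2)"
    unfolding De ee by (simp add: algebra_simps)
  also have "\<dots> \<le> lam * ((norm (P *v e))\<^sup>2 + norm (P *v e) * norm xs - (norm e)\<^sup>2)"
    using lam norm_cauchy_schwarz[of "P *v e" xs] by (intro mult_left_mono) auto
  finally have "(norm D)\<^sup>2 \<le> mu * (lam * ((norm (P *v e))\<^sup>2 + norm (P *v e) * norm xs - (norm e)\<^sup>2))"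
    using mu by (intro order_trans[OF coc mult_left_mono]) auto
  then have coc': "(norm D)\<^sup>2 \<le> mu * lam * ((norm (P *v e))\<^sup>2 + norm (P *v e) * norm xs - (norm e)\<^sup>2)"
    by (simp only: mult.assoc)
  have "P *v (transpose A *v D) = - lam *\<^sub>R (P *v e)"
    by (simp add: AtD matrix_vector_mult_minus matrix_vector_mult_scaleR)
  with proj lam have "lam * norm (P *v e) \<le> Z * norm D" by simp
  with coc' show ?thesis
    by (intro scalar_error_bound[OF mu lam _ _ _ _ Z _ _ lam_ge]) auto
qed

theorem theorem1:
  fixes A :: "real^'d^'n" and S :: "real^'m^'d" and lam mu :: real
    and f :: "real^'n \<Rightarrow> real" and g :: "real^'n \<Rightarrow> real^'n"
    and xstar :: "real^'d" and alpha :: "real^'m"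
  assumes lam_pos: "lam > 0"
    and convex: "convex_on UNIV f"
    and grad: "\<And>u. (f has_derivative (\<lambda>h. g u \<bullet> h)) (at u)"
    and lip: "\<And>u v. norm (g u - g v) \<le> mu * norm (u - v)"
    and xstar_min: "\<And>x. f (A *v xstar) + lam / 2 * (norm xstar)^2 \<le> f (A *v x) + lam / 2 * (norm x)^2"
    and alpha_min: "\<And>a. f (A *v (S *v alpha)) + lam / 2 * (norm (S *v alpha))^2
                        \<le> f (A *v (S *v a)) + lam / 2 * (norm (S *v a))^2"
    and lam_ge: "lam \<ge> 2 * mu * (Zf f A S (g (A *v xstar)))^2"
  shows "norm ((- (1 / lam)) *\<^sub>R (transpose A *v g (A *v (S *v alpha))) - xstar)
           \<le> sqrt (mu / (2 * lam)) * Zf f A S (g (A *v xstar)) * norm xstar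
       \<and> norm ((- (1 / lam)) *\<^sub>R (transpose A *v g (A *v (S *v alpha))) - xstar)
           \<le> sqrt (mu / (2 * lam)) * onorm (\<lambda>v. (projS_perp S ** transpose A) *v v) * norm xstar"
proof -
  define xt where "xt = (- (1 / lam)) *\<^sub>R (transpose A *v g (A *v (S *v alpha)))"
  define D where "D = g (A *v (S *v alpha)) - g (A *v xstar)"
  have mu: "mu \<ge> 0" by (rule lipschitz_constant_nonneg[OF lip])
  note opt = sketched_solution_optimality[OF lam_pos grad xstar_min alpha_min, folded xt_def D_def]
  have "A *v (S *v alpha) - A *v xstar = A *v ((xt - xstar) - projS_perp S *v ((xt - xstar) + xstar))"
    by (simp add: opt(2) algebra_simps)
  then have "(norm D)\<^sup>2 \<le> mu * (D \<bullet> (A *v ((xt - xstar) - projS_perp S *v ((xt - xstar) + xstar))))"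
    using lipschitz_gradient_cocoercive[OF convex grad lip mu, of "A *v (S *v alpha)" "A *v xstar"]
    by (simp add: D_def)
  moreover have "norm (projS_perp S *v (transpose A *v D)) \<le> Zf f A S (g (A *v xstar)) * norm D"
    unfolding D_def by (intro Zf_bound imageI gradient_in_fconj_dom[OF convex grad])
  ultimately have "norm (xt - xstar) \<le> sqrt (mu / (2 * lam)) * Zf f A S (g (A *v xstar)) * norm xstar"
    using projected_error_bound[OF lam_pos mu Zf_nonneg projS_perp_symmetric projS_perp_idempotent
        opt(1)] lam_ge by blast
  moreover have "sqrt (mu / (2 * lam)) * Zf f A S (g (A *v xstar)) * norm xstar
      \<le> sqrt (mu / (2 * lam)) * onorm (\<lambda>v. (projS_perp S ** transpose A) *v v) * norm xstar"
    using mu lam_pos by (intro mult_right_mono mult_left_mono Zf_le_onorm) auto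
  ultimately show ?thesis by (simp add: xt_def)
qed

end
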